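(* Let $A,B\subseteq\mathbb{N}$ with $A\cap B=\emptyset$, $A\in\mathcal{D}$ and $\underline{\underline{d}}(B)=0$. Then $\underline{\underline{d}}(A\cup B)=d(A)$.
   Context: $\mathbb{N}=\{1,2,3,\dots\}$. For $A\subseteq\mathbb{N}$ let $A(n)=|A\cap[1,n]|$. Let $\mathcal{D}$ be the collection of all $A\subseteq\mathbb{N}$ for which the asymptotic density $d(A)=\lim_{n\to\infty}\frac{A(n)}{n}$ exists. Define $\underline{\underline{d}}(A)=\sup\{d(B);\ B\subseteq A,\ B\in\mathcal{D}\}$. *)

theory Defs
  imports "HOL-Analysis.Analysis"
begin

definition counting :: "nat set \<Rightarrow> nat \<Rightarrow> nat" where
  "counting A n = card (A \<inter> {1..n})"

definition has_density :: "nat set \<Rightarrow> real \<Rightarrow> bool" where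
  "has_density A d \<longleftrightarrow> ((\<lambda>n. real (counting A n) / real n) \<longlongrightarrow> d) sequentially"

definition density_sets :: "nat set set" where
  "density_sets = {A. A \<subseteq> {1..} \<and> (\<exists>d. has_density A d)}"

definition density :: "nat set \<Rightarrow> real" where
  "density A = lim (\<lambda>n. real (counting A n) / real n)"

definition inner_density :: "nat set \<Rightarrow> real" where
  "inner_density A = Sup {density B | B. B \<subseteq> A \<and> B \<in> density_sets}"

end

theory Submission
  imports Defs
begin

text \<open>
  If some \<open>C \<subseteq> A \<union> B\<close> in \<open>\<D>\<close> had density \<open>g > d(A)\<close>, then \<open>C - A \<subseteq> B\<close> would gain at
  least \<open>(g - d(A))(n - m) - o(n)\<close> elements in every window \<open>(m, n]\<close>. Such a set contains a
  subset of density exactly \<open>c = g - d(A) > 0\<close>: greedily take the next element of \<open>C - A\<close>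
  whenever the count stays below \<open>c n\<close>. This contradicts \<open>inner_density B = 0\<close>, and
  \<open>A\<close> itself attains the bound \<open>d(A)\<close>.
\<close>

lemma counting_Suc:
  "counting X (Suc n) = counting X n + (if Suc n \<in> X then 1 else 0)"
proof -
  have "X \<inter> {1..Suc n} =
        (if Suc n \<in> X then insert (Suc n) (X \<inter> {1..n}) else X \<inter> {1..n})"
    by (auto simp: le_Suc_eq)
  then show ?thesis unfolding counting_def by auto
qed

lemma counting_le: "counting X n \<le> n"
proof -
  have "card (X \<inter> {1..n}) \<le> card {1..n}" by (rule card_mono) auto
  then show ?thesis unfolding counting_def by simp
qed

lemma counting_increment_le_union:
  assumes "C \<subseteq> F \<union> A" "m \<le> n"
  shows "real (counting C n) - counting C m \<le>
         (real (counting F n) - counting F m) + (real (counting A n) - counting A m)"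
  using assms(2)
proof (induction n rule: dec_induct)
  case base then show ?case by simp
next
  case (step n)
  have "real (counting C (Suc n)) - counting C n \<le>
        (real (counting F (Suc n)) - counting F n) + (real (counting A (Suc n)) - counting A n)"
    using assms(1) by (auto simp: counting_Suc)
  with step.IH show ?case by linarith
qed

lemma density_eqI: "has_density X d \<Longrightarrow> density X = d"
  unfolding has_density_def density_def by (rule limI)

lemma density_le_1:
  assumes "X \<in> density_sets"
  shows "density X \<le> 1"
proof -
  from assms obtain d where d: "has_density X d" unfolding density_sets_def by auto
  have "real (counting X n) / real n \<le> 1" for n
    using counting_le[of X n] by (cases "n = 0") (auto simp: divide_le_eq)
  then have "d \<le> 1" using d unfolding has_density_def by (intro LIMSEQ_le_const2) auto
  then show ?thesis using density_eqI[OF d] by simp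
qed

lemma density_le_inner_density:
  assumes "X \<subseteq> B" "X \<in> density_sets"
  shows "density X \<le> inner_density B"
proof -
  have "bdd_above {density Y | Y. Y \<subseteq> B \<and> Y \<in> density_sets}"
    using density_le_1 by (intro bdd_aboveI[of _ 1]) auto
  then show ?thesis unfolding inner_density_def using assms by (intro cSup_upper) auto
qed

lemma has_density_counting_affine_bound:
  assumes "has_density X d" "e > 0"
  obtains K where "\<And>n. \<bar>real (counting X n) - d * real n\<bar> \<le> e * real n + K"
proof -
  obtain N where N: "\<And>n. n \<ge> N \<Longrightarrow> \<bar>real (counting X n) / real n - d\<bar> < e"
    using assms LIMSEQ_D[of _ d e] unfolding has_density_def by auto
  have "\<bar>real (counting X n) - d * real n\<bar> \<le> e * real n + real N * (1 + \<bar>d\<bar>)" for n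
  proof (cases "n < N")
    case True
    have "\<bar>real (counting X n) - d * real n\<bar> \<le> real n + \<bar>d\<bar> * real n"
    proof -
      have "\<bar>d * real n\<bar> \<le> \<bar>d\<bar> * real n" by (simp add: abs_mult)
      then show ?thesis using counting_le[of X n] by linarith
    qed
    also have "\<dots> \<le> real N * (1 + \<bar>d\<bar>)"
      using True mult_left_mono[of "real n" "real N" "\<bar>d\<bar>"] by (simp add: algebra_simps)
    finally have "\<bar>real (counting X n) - d * real n\<bar> \<le> real N * (1 + \<bar>d\<bar>)" .
    moreover have "0 \<le> e * real n" using assms(2) by simp
    ultimately show ?thesis by linarith
  next
    case False
    show ?thesis
    proof (cases "n = 0")
      case True then show ?thesis by (simp add: counting_def)
    next
      case n: False
      have "real (counting X n) - d * real n = (real (counting X n) / real n - d) * real n"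
        using n by (simp add: field_simps)
      then have "\<bar>real (counting X n) - d * real n\<bar> = \<bar>real (counting X n) / real n - d\<bar> * real n"
        by (simp add: abs_mult)
      also have "\<dots> \<le> e * real n" using N[of n] False by (intro mult_right_mono) auto
      finally show ?thesis by (simp add: add_increasing2)
    qed
  qed
  then show ?thesis using that by blast
qed

lemma has_density_counting_increments:
  assumes "has_density X d" "e > 0"
  shows "\<exists>N. \<forall>n\<ge>N. \<forall>m\<le>n.
           \<bar>(real (counting X n) - real (counting X m)) - d * (real n - real m)\<bar> \<le> e * real n"
proof -
  obtain K where K: "\<And>n. \<bar>real (counting X n) - d * real n\<bar> \<le> e / 4 * real n + K"
    using has_density_counting_affine_bound[OF assms(1), of "e / 4"] assms(2) by auto
  obtain N :: nat where N: "4 * K / e \<le> real N" using real_arch_simple by blast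
  have "\<bar>(real (counting X n) - real (counting X m)) - d * (real n - real m)\<bar> \<le> e * real n"
    if "n \<ge> N" "m \<le> n" for n m
  proof -
    have "4 * K \<le> e * real n"
      using N that(1) assms(2) by (simp add: divide_le_eq mult.commute order_trans)
    moreover have "e / 4 * real m \<le> e / 4 * real n" using that(2) assms(2) by simp
    ultimately show ?thesis using K[of n] K[of m] by (simp add: abs_le_iff algebra_simps)
  qed
  then show ?thesis by blast
qed

lemma counting_diff_increments_lower_bound:
  assumes "has_density C g" "has_density A a" "e > 0"
  shows "\<exists>N. \<forall>n\<ge>N. \<forall>m\<le>n. real (counting (C - A) n) - real (counting (C - A) m)
            \<ge> (g - a) * (real n - real m) - e * real n"
proof -
  obtain N1 where N1: "\<forall>n\<ge>N1. \<forall>m\<le>n.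
      \<bar>(real (counting C n) - real (counting C m)) - g * (real n - real m)\<bar> \<le> e / 2 * real n"
    using has_density_counting_increments[OF assms(1), of "e / 2"] assms(3) by auto
  obtain N2 where N2: "\<forall>n\<ge>N2. \<forall>m\<le>n.
      \<bar>(real (counting A n) - real (counting A m)) - a * (real n - real m)\<bar> \<le> e / 2 * real n"
    using has_density_counting_increments[OF assms(2), of "e / 2"] assms(3) by auto
  have "real (counting (C - A) n) - real (counting (C - A) m)
          \<ge> (g - a) * (real n - real m) - e * real n" if "n \<ge> max N1 N2" "m \<le> n" for n m
  proof -
    have "\<bar>(real (counting C n) - real (counting C m)) - g * (real n - real m)\<bar> \<le> e / 2 * real n"
         "\<bar>(real (counting A n) - real (counting A m)) - a * (real n - real m)\<bar> \<le> e / 2 * real n"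
      using N1 N2 that by auto
    moreover have "C \<subseteq> (C - A) \<union> A" by blast
    ultimately show ?thesis
      using counting_increment_le_union[of C "C - A" A m n] that(2)
        left_diff_distrib[of g a "real n - real m"]
      unfolding abs_le_iff by linarith
  qed
  then show ?thesis by blast
qed

primrec greedy_count :: "nat set \<Rightarrow> real \<Rightarrow> nat \<Rightarrow> nat" where
  "greedy_count F c 0 = 0"
| "greedy_count F c (Suc k) =
     (if Suc k \<in> F \<and> real (greedy_count F c k) + 1 \<le> c * real (Suc k)
      then Suc (greedy_count F c k) else greedy_count F c k)"

definition greedy_set :: "nat set \<Rightarrow> real \<Rightarrow> nat set" where
  "greedy_set F c = {Suc k | k. Suc k \<in> F \<and> real (greedy_count F c k) + 1 \<le> c * real (Suc k)}"

lemma greedy_set_subset: "greedy_set F c \<subseteq> F"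
  unfolding greedy_set_def by auto

lemma counting_greedy_set: "counting (greedy_set F c) n = greedy_count F c n"
proof (induction n)
  case 0 then show ?case by (simp add: counting_def)
next
  case (Suc n)
  have "Suc n \<in> greedy_set F c \<longleftrightarrow>
        Suc n \<in> F \<and> real (greedy_count F c n) + 1 \<le> c * real (Suc n)"
    unfolding greedy_set_def by auto
  then show ?case using Suc by (simp add: counting_Suc)
qed

lemma greedy_count_le:
  assumes "c \<ge> 0"
  shows "real (greedy_count F c n) \<le> c * real n"
proof (induction n)
  case 0 then show ?case by simp
next
  case (Suc n)
  have "c * real n \<le> c * real (Suc n)" using assms by (intro mult_left_mono) auto
  then show ?case using Suc by auto
qed

text \<open>
  Going back from \<open>n\<close> to the last time \<open>m\<close> the count was within \<open>1\<close> of \<open>c m\<close>: in between the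
  rule never refused an element of \<open>F\<close>.
\<close>

lemma greedy_count_last_deficit:
  "\<exists>m\<le>n. c * real m - real (greedy_count F c m) < 1 \<and>
     real (greedy_count F c n) - real (greedy_count F c m) \<ge>
     real (counting F n) - real (counting F m)"
proof (induction n)
  case 0 then show ?case by simp
next
  case (Suc n)
  show ?case
  proof (cases "c * real (Suc n) - real (greedy_count F c (Suc n)) < 1")
    case True then show ?thesis by (intro exI[of _ "Suc n"]) auto
  next
    case False
    from Suc obtain m where m: "m \<le> n" "c * real m - real (greedy_count F c m) < 1"
      "real (greedy_count F c n) - real (greedy_count F c m) \<ge>
       real (counting F n) - real (counting F m)" by blast
    have "real (greedy_count F c (Suc n)) - real (greedy_count F c n) \<ge>
          real (counting F (Suc n)) - real (counting F n)"
    proof (cases "Suc n \<in> F")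
      case True
      have "real (greedy_count F c n) + 1 \<le> c * real (Suc n)"
      proof (rule ccontr)
        assume refused: "\<not> ?thesis"
        then have "greedy_count F c (Suc n) = greedy_count F c n" by simp
        with False refused show False by linarith
      qed
      then show ?thesis using True by (simp add: counting_Suc)
    next
      case False
      then show ?thesis by (simp add: counting_Suc)
    qed
    with m show ?thesis by (intro exI[of _ m]) auto
  qed
qed

lemma has_density_greedy_set:
  assumes c: "c \<ge> 0"
    and F: "\<And>e. e > 0 \<Longrightarrow> \<exists>N. \<forall>n\<ge>N. \<forall>m\<le>n.
              real (counting F n) - real (counting F m) \<ge> c * (real n - real m) - e * real n"
  shows "has_density (greedy_set F c) c"
  unfolding has_density_def counting_greedy_set
proof (rule LIMSEQ_I)
  fix r :: real assume r: "r > 0"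
  obtain N where N: "\<forall>n\<ge>N. \<forall>m\<le>n.
      real (counting F n) - real (counting F m) \<ge> c * (real n - real m) - r / 2 * real n"
    using F[of "r / 2"] r by auto
  obtain K :: nat where K: "real K > 2 / r" using reals_Archimedean2 by blast
  have "norm (real (greedy_count F c n) / real n - c) < r" if n: "n \<ge> max N (Suc K)" for n
  proof -
    have npos: "real n > 0" using n by auto
    have "real K < real n" using n by simp
    then have "2 / r < real n" using K by linarith
    then have "1 < r / 2 * real n" using r by (simp add: field_simps)
    obtain m where m: "m \<le> n" "c * real m - real (greedy_count F c m) < 1"
      "real (greedy_count F c n) - real (greedy_count F c m) \<ge>
       real (counting F n) - real (counting F m)"
      using greedy_count_last_deficit by blast
    moreover have "real (counting F n) - real (counting F m) \<ge>
                   c * (real n - real m) - r / 2 * real n"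
      using N n m(1) by auto
    ultimately have "c * real n - real (greedy_count F c n) < r * real n"
      using \<open>1 < r / 2 * real n\<close> by (simp add: right_diff_distrib)
    then have "\<bar>real (greedy_count F c n) - c * real n\<bar> < r * real n"
      using greedy_count_le[OF c, of F n] by auto
    moreover have "real (greedy_count F c n) / real n - c =
                   (real (greedy_count F c n) - c * real n) / real n"
      using npos by (simp add: field_simps)
    ultimately show ?thesis using npos by (simp add: abs_divide divide_less_eq)
  qed
  then show "\<exists>no. \<forall>n\<ge>no. norm (real (greedy_count F c n) / real n - c) < r" by blast
qed

lemma has_density_subset_of_diff:
  assumes "has_density C g" "has_density A a" "a < g"
  shows "has_density (greedy_set (C - A) (g - a)) (g - a)"
proof (rule has_density_greedy_set)
  show "0 \<le> g - a" using assms(3) by simp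
next
  fix e :: real assume "e > 0"
  then show "\<exists>N. \<forall>n\<ge>N. \<forall>m\<le>n. real (counting (C - A) n) - real (counting (C - A) m)
               \<ge> (g - a) * (real n - real m) - e * real n"
    by (rule counting_diff_increments_lower_bound[OF assms(1,2)])
qed

theorem lemma3p8:
  fixes A B :: "nat set"
  assumes "A \<subseteq> {1..}" and "B \<subseteq> {1..}"
    and "A \<inter> B = {}"
    and "A \<in> density_sets"
    and "inner_density B = 0"
  shows "inner_density (A \<union> B) = density A"
proof -
  obtain a where a: "has_density A a" using assms(4) unfolding density_sets_def by auto
  have "density C \<le> a" if C: "C \<subseteq> A \<union> B" "C \<in> density_sets" for C
  proof (rule ccontr)
    obtain g where g: "has_density C g" using C(2) unfolding density_sets_def by auto
    assume "\<not> density C \<le> a"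
    then have "a < g" using density_eqI[OF g] by simp
    define G where "G = greedy_set (C - A) (g - a)"
    have G: "has_density G (g - a)"
      unfolding G_def using has_density_subset_of_diff[OF g a \<open>a < g\<close>] .
    have "G \<subseteq> B" using greedy_set_subset C(1) unfolding G_def by blast
    moreover from this have "G \<in> density_sets"
      using G assms(2) unfolding density_sets_def by auto
    ultimately have "density G \<le> 0" using density_le_inner_density assms(5) by metis
    then show False using density_eqI[OF G] \<open>a < g\<close> by simp
  qed
  then show ?thesis
    using assms(4) density_eqI[OF a] unfolding inner_density_def
    by (intro cSup_eq_maximum) auto
qed

end
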